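(* Let $G=A_\infty$ be the finitary alternating group on a countably infinite set (the group of even permutations moving only finitely many points). Then every element of $G$ is a commutator $xyx^{-1}y^{-1}$ with $x,y\in G$, but for every conjugacy class $C$ of $G$ one has $C^2=\{c_1c_2: c_1,c_2\in C\}\ne G$. *)

theory Defs
  imports "HOL-Combinatorics.Permutations"
begin

definition Alt_inf :: "(nat \<Rightarrow> nat) set" where
  "Alt_inf = {p. permutation p \<and> evenperm p}"

definition conj_class :: "(nat \<Rightarrow> nat) \<Rightarrow> (nat \<Rightarrow> nat) set" where
  "conj_class g = {h \<circ> g \<circ> inv h | h. h \<in> Alt_inf}"

end

theory Submission
  imports Defs "HOL-Combinatorics.Cycles"
begin

text \<open>An even permutation of finite support is a commutator of two permutations of its support.
  Decompose it into disjoint cycles. A cycle of odd length is the square of a power of itself, and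
  a reflection of the cycle inverts that power, so the cycle is the commutator of the two. Two cycles
  of even length together are a commutator by an explicit construction on positions, and
  commutators with disjoint supports multiply. Composing the two witnesses with transpositions of
  fresh points makes them even without changing their commutator.

  Conversely, a product of two conjugates of g moves at most twice as many points as g, whereas
  \<open>A\<^sub>\<infinity>\<close> contains cycles of every odd length.\<close>

section \<open>Commutators of permutations of a set\<close>

text \<open>The equation \<open>g \<circ> y \<circ> x = x \<circ> y\<close> is \<open>g = x y x\<^sup>-\<^sup>1 y\<^sup>-\<^sup>1\<close> without inverses.\<close>
definition commutator_on :: "'a set \<Rightarrow> ('a \<Rightarrow> 'a) \<Rightarrow> bool" where
  "commutator_on S g \<longleftrightarrow> (\<exists>x y. x permutes S \<and> y permutes S \<and> g \<circ> y \<circ> x = x \<circ> y)"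

lemma commutator_of_comp_eq:
  assumes "bij x" "bij y" "g \<circ> y \<circ> x = x \<circ> y"
  shows "g = x \<circ> y \<circ> inv x \<circ> inv y"
  by (metis assms bijection.intro bijection.inv_comp_right comp_assoc comp_id)

lemma permutes_disjoint_commute:
  assumes f: "f permutes S" and g: "g permutes T" and "S \<inter> T = {}"
  shows "f \<circ> g = g \<circ> f"
proof
  fix a
  have "f a \<in> S \<longleftrightarrow> a \<in> S" "g a \<in> T \<longleftrightarrow> a \<in> T"
    using f g by (simp_all add: permutes_in_image)
  moreover have "a \<notin> S \<or> a \<notin> T" "f a \<notin> S \<or> f a \<notin> T" "g a \<notin> S \<or> g a \<notin> T"
    using assms(3) by blast+
  ultimately show "(f \<circ> g) a = (g \<circ> f) a"
    using f g by (cases "a \<in> S"; cases "a \<in> T") (auto simp: permutes_not_in)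
qed

lemma commutator_on_permutes:
  assumes "commutator_on S g"
  shows "g permutes S"
proof -
  obtain x y where x: "x permutes S" and y: "y permutes S" and eq: "g \<circ> y \<circ> x = x \<circ> y"
    using assms unfolding commutator_on_def by blast
  have "g = x \<circ> y \<circ> inv x \<circ> inv y"
    using commutator_of_comp_eq[OF permutes_bij[OF x] permutes_bij[OF y] eq] .
  then show ?thesis using x y by (simp add: permutes_compose permutes_inv)
qed

lemma commutator_eq_compose_disjoint:
  assumes x1: "x1 permutes S1" and y1: "y1 permutes S1" and x2: "x2 permutes S2" and y2: "y2 permutes S2"
    and disj: "S1 \<inter> S2 = {}"
    and eq1: "g1 \<circ> y1 \<circ> x1 = x1 \<circ> y1" and eq2: "g2 \<circ> y2 \<circ> x2 = x2 \<circ> y2"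
  shows "(g1 \<circ> g2) \<circ> (y1 \<circ> y2) \<circ> (x1 \<circ> x2) = (x1 \<circ> x2) \<circ> (y1 \<circ> y2)"
proof -
  have g2: "g2 permutes S2"
    by (rule commutator_on_permutes) (use x2 y2 eq2 in \<open>auto simp: commutator_on_def\<close>)
  have c: "g2 \<circ> y1 = y1 \<circ> g2" "y2 \<circ> x1 = x1 \<circ> y2" "g2 \<circ> x1 = x1 \<circ> g2" "y1 \<circ> x2 = x2 \<circ> y1"
    using disj permutes_disjoint_commute[OF g2 y1] permutes_disjoint_commute[OF y2 x1]
      permutes_disjoint_commute[OF g2 x1] permutes_disjoint_commute[OF y1 x2] by blast+
  have "(g1 \<circ> g2) \<circ> (y1 \<circ> y2) \<circ> (x1 \<circ> x2) = g1 \<circ> (g2 \<circ> y1) \<circ> (y2 \<circ> x1) \<circ> x2"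
    by (simp add: comp_assoc)
  also have "\<dots> = g1 \<circ> y1 \<circ> (g2 \<circ> x1) \<circ> y2 \<circ> x2"
    by (simp add: c(1,2) comp_assoc)
  also have "\<dots> = (g1 \<circ> y1 \<circ> x1) \<circ> (g2 \<circ> y2 \<circ> x2)"
    by (simp add: c(3) comp_assoc)
  also have "\<dots> = (x1 \<circ> y1) \<circ> (x2 \<circ> y2)" by (simp only: eq1 eq2)
  also have "\<dots> = x1 \<circ> (y1 \<circ> x2) \<circ> y2"
    by (simp add: comp_assoc)
  also have "\<dots> = (x1 \<circ> x2) \<circ> (y1 \<circ> y2)"
    by (simp add: c(4) comp_assoc)
  finally show ?thesis .
qed

lemma commutator_on_Un:
  assumes "commutator_on S1 g1" "commutator_on S2 g2" "S1 \<inter> S2 = {}"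
  shows "commutator_on (S1 \<union> S2) (g1 \<circ> g2)"
proof -
  obtain x1 y1 where 1: "x1 permutes S1" "y1 permutes S1" "g1 \<circ> y1 \<circ> x1 = x1 \<circ> y1"
    using assms(1) unfolding commutator_on_def by blast
  obtain x2 y2 where 2: "x2 permutes S2" "y2 permutes S2" "g2 \<circ> y2 \<circ> x2 = x2 \<circ> y2"
    using assms(2) unfolding commutator_on_def by blast
  have "x1 \<circ> x2 permutes S1 \<union> S2" "y1 \<circ> y2 permutes S1 \<union> S2"
    using 1 2 by (meson permutes_compose permutes_subset sup_ge1 sup_ge2)+
  then show ?thesis unfolding commutator_on_def
    using commutator_eq_compose_disjoint[OF 1(1,2) 2(1,2) assms(3) 1(3) 2(3)] by blast
qed

section \<open>Cycles as commutators\<close>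

definition index_perm :: "'a list \<Rightarrow> (nat \<Rightarrow> nat) \<Rightarrow> 'a \<Rightarrow> 'a" where
  "index_perm zs f a = (if a \<in> set zs then zs ! f (THE i. i < length zs \<and> zs ! i = a) else a)"

lemma index_perm_nth: "distinct zs \<Longrightarrow> i < length zs \<Longrightarrow> index_perm zs f (zs ! i) = zs ! f i"
  unfolding index_perm_def
  by (auto intro!: arg_cong[where f = "\<lambda>j. zs ! f j"] the_equality simp: nth_eq_iff_index_eq)

lemma index_perm_permutes:
  assumes zs: "distinct zs" and maps: "\<And>i. i < length zs \<Longrightarrow> f i < length zs"
    and inj: "inj_on f {..<length zs}"
  shows "index_perm zs f permutes set zs"
proof (rule bij_imp_permutes)
  have "f ` {..<length zs} = {..<length zs}"
    using maps inj by (intro endo_inj_surj) auto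
  moreover have set_zs: "set zs = (!) zs ` {..<length zs}" by (auto simp: in_set_conv_nth)
  moreover have "index_perm zs f ` set zs = (!) zs ` f ` {..<length zs}"
    unfolding set_zs image_image using zs by (intro image_cong) (auto simp: index_perm_nth)
  ultimately have "index_perm zs f ` set zs = set zs" by simp
  then show "bij_betw (index_perm zs f) (set zs) (set zs)"
    by (simp add: bij_betw_def eq_card_imp_inj_on)
  show "index_perm zs f a = a" if "a \<notin> set zs" for a
    using that by (simp add: index_perm_def)
qed

lemma commutator_on_by_indices:
  assumes zs: "distinct zs"
    and X: "\<And>i. i < length zs \<Longrightarrow> X i < length zs" "inj_on X {..<length zs}"
    and Y: "\<And>i. i < length zs \<Longrightarrow> Y i < length zs" "inj_on Y {..<length zs}"
    and eq: "\<And>i. i < length zs \<Longrightarrow> G (Y (X i)) = X (Y i)"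
    and g_nth: "\<And>i. i < length zs \<Longrightarrow> g (zs ! i) = zs ! G i"
    and g_out: "\<And>a. a \<notin> set zs \<Longrightarrow> g a = a"
  shows "commutator_on (set zs) g"
  unfolding commutator_on_def
proof (intro exI conjI)
  show x: "index_perm zs X permutes set zs" and y: "index_perm zs Y permutes set zs"
    using index_perm_permutes zs X Y by blast+
  show "g \<circ> index_perm zs Y \<circ> index_perm zs X = index_perm zs X \<circ> index_perm zs Y"
  proof
    fix a
    show "(g \<circ> index_perm zs Y \<circ> index_perm zs X) a = (index_perm zs X \<circ> index_perm zs Y) a"
    proof (cases "a \<in> set zs")
      case True
      then obtain i where i: "i < length zs" and a: "a = zs ! i" by (auto simp: in_set_conv_nth)
      have "(g \<circ> index_perm zs Y \<circ> index_perm zs X) a = g (zs ! Y (X i))"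
        using zs i X Y by (simp add: a index_perm_nth)
      also have "\<dots> = zs ! X (Y i)" using g_nth[OF Y(1)[OF X(1)[OF i]]] eq[OF i] by simp
      also have "\<dots> = (index_perm zs X \<circ> index_perm zs Y) a"
        using zs i Y by (simp add: a index_perm_nth)
      finally show ?thesis .
    next
      case False
      then show ?thesis using g_out x y by (simp add: permutes_not_in)
    qed
  qed
qed

lemma cycle_of_list_nth:
  assumes "distinct cs" "i < length cs"
  shows "cycle_of_list cs (cs ! i) = cs ! (Suc i mod length cs)"
proof -
  have "map (cycle_of_list cs) cs = rotate 1 cs"
    using cyclic_rotation[OF assms(1), of 1] by simp
  then have "map (cycle_of_list cs) cs ! i = rotate1 cs ! i" by simp
  then show ?thesis using assms(2) by (simp add: nth_rotate1)
qed

lemma evenperm_cycle_of_list: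
  "distinct cs \<Longrightarrow> evenperm (cycle_of_list cs) \<longleftrightarrow> cs = [] \<or> odd (length cs)"
proof (induction cs rule: cycle_of_list.induct)
  case (1 i j cs)
  have "evenperm (cycle_of_list (i # j # cs))
      \<longleftrightarrow> (evenperm (transpose i j) \<longleftrightarrow> evenperm (cycle_of_list (j # cs)))"
    unfolding cycle_of_list.simps by (rule evenperm_comp[OF permutation_swap_id permutation_of_cycle])
  also have "\<dots> \<longleftrightarrow> even (length (j # cs))" using 1 by (simp add: evenperm_swap)
  finally show ?case by (simp del: cycle_of_list.simps)
qed simp_all

lemma inj_on_add_mod: "inj_on (\<lambda>i. (i + k) mod n) {..<n::nat}"
proof -
  have le: "i \<le> j" if "(i + k) mod n = (j + k) mod n" "i < n" "j \<le> i" for i j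
  proof -
    have "n dvd i - j" using that mod_eq_dvd_iff_nat[of "j + k" "i + k" n] by simp
    moreover have "i - j < n" using that by linarith
    ultimately show ?thesis by (cases "i - j = 0") (auto dest: dvd_imp_le)
  qed
  show ?thesis
  proof (rule inj_onI)
    fix i j assume "i \<in> {..<n}" "j \<in> {..<n}" "(i + k) mod n = (j + k) mod n"
    then show "i = j" using le[of i j] le[of j i] by (cases "j \<le> i") auto
  qed
qed

lemma inj_on_diff_mod: "inj_on (\<lambda>i. (n - i) mod n) {..<n::nat}"
  by (auto simp: inj_on_def mod_if split: if_splits)

lemma cyclic_succ_refl_rot:
  fixes n k i :: nat
  assumes nk: "2 * k = Suc n" and i: "i < n"
  shows "Suc ((n - (i + k) mod n) mod n) mod n = ((n - i) mod n + k) mod n"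
proof -
  have mod_eq: "(1 + (n' - (i' + k') mod n') mod n') mod n' = (1 - i' - k') mod n'" for n' i' k' :: int
  proof -
    have "(1 + (n' - (i' + k') mod n') mod n') mod n' = (1 + (n' - (i' + k'))) mod n'"
      by (metis mod_add_right_eq mod_diff_right_eq)
    also have "\<dots> = (1 - i' - k' + n') mod n'" by (simp add: algebra_simps)
    finally show ?thesis by simp
  qed
  have l: "int (Suc ((n - (i + k) mod n) mod n)) mod int n = (1 - int i - int k) mod int n"
    using i mod_eq[of "int n" "int i" "int k"] by (simp add: zmod_int of_nat_diff less_imp_le)
  have r: "int ((n - i) mod n + k) mod int n = (int k - int i) mod int n"
    using i by (simp add: zmod_int of_nat_diff mod_add_left_eq)
  have "(1 - int i - int k) - (int k - int i) = - int n" using nk by linarith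
  then have "(1 - int i - int k) mod int n = (int k - int i) mod int n"
    by (metis dvd_minus_iff dvd_refl mod_eq_dvd_iff)
  then have "int (Suc ((n - (i + k) mod n) mod n) mod n) = int (((n - i) mod n + k) mod n)"
    using l r by (simp only: zmod_int)
  then show ?thesis by (simp only: of_nat_eq_iff)
qed

text \<open>With \<open>2k = n + 1\<close>, the rotation by \<open>k\<close> squares to the successor modulo \<open>n\<close> and is inverted
  by the reflection \<open>i \<mapsto> -i\<close>.\<close>

lemma commutator_on_odd_cycle:
  assumes cs: "distinct cs" and odd: "odd (length cs)"
  shows "commutator_on (set cs) (cycle_of_list cs)"
proof -
  define n where "n = length cs"
  define k where "k = Suc n div 2"
  have nk: "2 * k = Suc n" using odd by (simp add: k_def n_def)
  have "n > 0" "cs \<noteq> []" using odd odd_pos by (auto simp: n_def)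
  show ?thesis
  proof (rule commutator_on_by_indices[where X = "\<lambda>i. (i + k) mod n" and Y = "\<lambda>i. (n - i) mod n"
        and G = "\<lambda>i. Suc i mod n"])
    show "distinct cs" by (rule cs)
    show "(i + k) mod n < length cs" "(n - i) mod n < length cs" for i
      using \<open>n > 0\<close> by (simp_all add: n_def)
    show "inj_on (\<lambda>i. (i + k) mod n) {..<length cs}" "inj_on (\<lambda>i. (n - i) mod n) {..<length cs}"
      unfolding n_def by (rule inj_on_add_mod inj_on_diff_mod)+
    show "Suc ((n - (i + k) mod n) mod n) mod n = ((n - i) mod n + k) mod n" if "i < length cs" for i
      using cyclic_succ_refl_rot[OF nk] that by (simp add: n_def)
    show "cycle_of_list cs (cs ! i) = cs ! (Suc i mod n)" if "i < length cs" for i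
      using cycle_of_list_nth[OF cs that] by (simp add: n_def)
    show "cycle_of_list cs a = a" if "a \<notin> set cs" for a
      using that by (rule id_outside_supp)
  qed
qed

text \<open>Positions \<open>[0, m)\<close> and \<open>[m, m + n)\<close> carry the two cycles, \<open>m = 2h\<close> and \<open>n = 2k\<close>. The
  involutions \<open>pair_refl\<close> and \<open>pair_succ \<circ> pair_refl\<close> each fix exactly two positions
  (\<open>0, h\<close> and \<open>m, m + k\<close> respectively), so they are conjugate; \<open>pair_conj\<close> is an explicit
  conjugator, and then \<open>pair_succ = [pair_conj, pair_refl]\<close>.\<close>

definition pair_succ :: "nat \<Rightarrow> nat \<Rightarrow> nat \<Rightarrow> nat" where
  "pair_succ m n i = (if i < m then (if i = m - 1 then 0 else i + 1) else (if i = m + n - 1 then m else i + 1))"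

definition pair_refl :: "nat \<Rightarrow> nat \<Rightarrow> nat \<Rightarrow> nat" where
  "pair_refl m n i = (if i < m then (if i = 0 then 0 else m - i) else 2*m + n - 1 - i)"

definition pair_conj :: "nat \<Rightarrow> nat \<Rightarrow> nat \<Rightarrow> nat" where
  "pair_conj m n i = (if i = 0 then m else if i < m div 2 then i else if i = m div 2 then m + n div 2
     else if i < m - 1 then i + 1 else if i = m - 1 then 0 else if i = m then m div 2
     else if i < m + n div 2 then i else if i < m + n - 1 then i + 1
     else if m = 2 then 0 else m div 2 + 1)"

definition pair_conj_inv :: "nat \<Rightarrow> nat \<Rightarrow> nat \<Rightarrow> nat" where
  "pair_conj_inv m n j = (if j = 0 then (if m = 2 then m + n - 1 else m - 1) else if j < m div 2 then j
     else if j = m div 2 then m else if j = m div 2 + 1 \<and> m > 2 then m + n - 1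
     else if j < m then j - 1 else if j = m then 0 else if j < m + n div 2 then j
     else if j = m + n div 2 then m div 2 else j - 1)"

context
  fixes m n h k :: nat
  assumes mh: "m = 2*h" and nk: "n = 2*k" and h1: "h \<ge> 1" and k1: "k \<ge> 1"
begin

lemma pair_index_cases:
  assumes "i < m + n"
  obtains "i = 0" | "0 < i" "i < h" | "i = h" | "h < i" "i < m - 1" | "i = m - 1" "i \<noteq> h"
    | "i = m" | "m < i" "i < m + k" | "m + k \<le> i" "i < m + n - 1" | "i = m + n - 1" "i \<noteq> m"
  using assms mh nk h1 k1 by linarith

lemma pair_conj_eqs:
  shows "pair_conj m n 0 = m"
    and "0 < j \<Longrightarrow> j < h \<Longrightarrow> pair_conj m n j = j"
    and "pair_conj m n h = m + k"
    and "h < j \<Longrightarrow> j < m - 1 \<Longrightarrow> pair_conj m n j = j + 1"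
    and "j = m - 1 \<Longrightarrow> j \<noteq> h \<Longrightarrow> pair_conj m n j = 0"
    and "pair_conj m n m = h"
    and "m < j \<Longrightarrow> j < m + k \<Longrightarrow> pair_conj m n j = j"
    and "m + k \<le> j \<Longrightarrow> j < m + n - 1 \<Longrightarrow> pair_conj m n j = j + 1"
    and "j = m + n - 1 \<Longrightarrow> pair_conj m n j = (if m = 2 then 0 else h + 1)"
  using mh nk h1 k1 by (simp_all add: pair_conj_def; arith?)+

lemma pair_refl_eqs:
  shows "pair_refl m n 0 = 0"
    and "0 < j \<Longrightarrow> j < m \<Longrightarrow> pair_refl m n j = m - j"
    and "m \<le> j \<Longrightarrow> pair_refl m n j = 2*m + n - 1 - j"
  using mh nk h1 k1 by (simp_all add: pair_refl_def; arith?)+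

lemma pair_succ_eqs:
  shows "j < m \<Longrightarrow> j \<noteq> m - 1 \<Longrightarrow> pair_succ m n j = j + 1"
    and "j = m - 1 \<Longrightarrow> pair_succ m n j = 0"
    and "m \<le> j \<Longrightarrow> j \<noteq> m + n - 1 \<Longrightarrow> pair_succ m n j = j + 1"
    and "j = m + n - 1 \<Longrightarrow> pair_succ m n j = m"
  using mh nk h1 k1 by (simp_all add: pair_succ_def; arith?)+

lemma pair_succ_refl_conj:
  assumes i: "i < m + n"
  shows "pair_succ m n (pair_refl m n (pair_conj m n i)) = pair_conj m n (pair_refl m n i)"
proof -
  note bounds = mh nk h1 k1 i
  from pair_index_cases[OF i] show ?thesis
  proof cases
    case 1
    have a: "pair_conj m n i = m" using 1 pair_conj_eqs(1) by simp
    have b: "pair_refl m n m = m + n - 1" using pair_refl_eqs(3)[of m] bounds by simp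
    have c: "pair_succ m n (m + n - 1) = m" by (rule pair_succ_eqs(4)) simp
    have d: "pair_refl m n i = 0" using 1 pair_refl_eqs(1) by simp
    show ?thesis using a b c d 1 pair_conj_eqs(1) by simp
  next
    case 2
    have a: "pair_conj m n i = i" by (rule pair_conj_eqs(2)) (use 2 in linarith)+
    have b: "pair_refl m n i = m - i" by (rule pair_refl_eqs(2)) (use 2 bounds in linarith)+
    show ?thesis
    proof (cases "i = 1")
      case True
      have c: "pair_succ m n (m - i) = 0" by (rule pair_succ_eqs(2)) (use True in simp)
      have e: "pair_conj m n (m - i) = 0" by (rule pair_conj_eqs(5)) (use True 2 bounds in linarith)+
      show ?thesis using a b c e by simp
    next
      case False
      have c: "pair_succ m n (m - i) = m - i + 1" by (rule pair_succ_eqs(1)) (use False 2 bounds in linarith)+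
      have e: "pair_conj m n (m - i) = m - i + 1" by (rule pair_conj_eqs(4)) (use False 2 bounds in linarith)+
      show ?thesis using a b c e by simp
    qed
  next
    case 3
    have a: "pair_conj m n i = m + k" using 3 pair_conj_eqs(3) by simp
    have b: "pair_refl m n (m + k) = m + k - 1" using pair_refl_eqs(3)[of "m + k"] bounds by simp
    have c: "pair_succ m n (m + k - 1) = m + k" using pair_succ_eqs(3)[of "m + k - 1"] bounds by simp
    have d: "pair_refl m n i = h" using pair_refl_eqs(2)[of i] 3 bounds by simp
    show ?thesis using a b c d 3 pair_conj_eqs(3) by simp
  next
    case 4
    have a: "pair_conj m n i = i + 1" by (rule pair_conj_eqs(4)) (use 4 in linarith)+
    have b: "pair_refl m n (i + 1) = m - i - 1" using pair_refl_eqs(2)[of "i+1"] 4 bounds by simp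
    have c: "pair_succ m n (m - i - 1) = m - i" using pair_succ_eqs(1)[of "m - i - 1"] 4 bounds by simp
    have d: "pair_refl m n i = m - i" using pair_refl_eqs(2)[of i] 4 bounds by simp
    have e: "pair_conj m n (m - i) = m - i" by (rule pair_conj_eqs(2)) (use 4 bounds in linarith)+
    show ?thesis using a b c d e by simp
  next
    case 5
    have a: "pair_conj m n i = 0" using pair_conj_eqs(5) 5 by simp
    have c: "pair_succ m n 0 = 1" using pair_succ_eqs(1)[of 0] 5 bounds by simp
    have d: "pair_refl m n i = 1" using pair_refl_eqs(2)[of i] 5 bounds by simp
    have e: "pair_conj m n 1 = 1" by (rule pair_conj_eqs(2)) (use 5 bounds in linarith)+
    show ?thesis using a c d e pair_refl_eqs(1) by simp
  next
    case 6
    have a: "pair_conj m n i = h" using pair_conj_eqs(6) 6 by simp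
    have b: "pair_refl m n h = h" using pair_refl_eqs(2)[of h] bounds by simp
    have d: "pair_refl m n i = m + n - 1" using pair_refl_eqs(3)[of i] 6 bounds by simp
    have e: "pair_conj m n (m + n - 1) = (if m = 2 then 0 else h + 1)" by (rule pair_conj_eqs(9)) simp
    show ?thesis
    proof (cases "m = 2")
      case True
      have c: "pair_succ m n h = 0" by (rule pair_succ_eqs(2)) (use True bounds in linarith)
      show ?thesis using a b c d e True by simp
    next
      case False
      have c: "pair_succ m n h = h + 1" by (rule pair_succ_eqs(1)) (use False bounds in linarith)+
      show ?thesis using a b c d e False by simp
    qed
  next
    case 7
    have a: "pair_conj m n i = i" by (rule pair_conj_eqs(7)) (use 7 in linarith)+
    have b: "pair_refl m n i = 2*m + n - 1 - i" using pair_refl_eqs(3)[of i] 7 by simp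
    have c: "pair_succ m n (2*m + n - 1 - i) = 2*m + n - 1 - i + 1" by (rule pair_succ_eqs(3)) (use 7 bounds in linarith)+
    have e: "pair_conj m n (2*m + n - 1 - i) = 2*m + n - 1 - i + 1" by (rule pair_conj_eqs(8)) (use 7 bounds in linarith)+
    show ?thesis using a b c e by simp
  next
    case 8
    have a: "pair_conj m n i = i + 1" by (rule pair_conj_eqs(8)) (use 8 in linarith)+
    have b: "pair_refl m n (i + 1) = 2*m + n - 1 - (i + 1)" using pair_refl_eqs(3)[of "i+1"] 8 bounds by simp
    have c: "pair_succ m n (2*m + n - 1 - (i + 1)) = 2*m + n - 1 - (i + 1) + 1" by (rule pair_succ_eqs(3)) (use 8 bounds in linarith)+
    have d: "pair_refl m n i = 2*m + n - 1 - i" using pair_refl_eqs(3)[of i] 8 bounds by simp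
    have e: "pair_conj m n (2*m + n - 1 - i) = 2*m + n - 1 - i" by (rule pair_conj_eqs(7)) (use 8 bounds in linarith)+
    have f: "2*m + n - 1 - (i + 1) + 1 = 2*m + n - 1 - i" using 8 bounds by linarith
    show ?thesis using a b c d e f by simp
  next
    case 9
    have d: "pair_refl m n i = m" using pair_refl_eqs(3)[of i] 9 bounds by simp
    show ?thesis
    proof (cases "m = 2")
      case True
      have a: "pair_conj m n i = 0" using pair_conj_eqs(9) 9 True by simp
      have c: "pair_succ m n 0 = 1" using pair_succ_eqs(1)[of 0] True by simp
      have e: "pair_conj m n m = 1" using pair_conj_eqs(6) True bounds by simp
      show ?thesis using a c d e pair_refl_eqs(1) True by simp
    next
      case False
      have a: "pair_conj m n i = h + 1" using pair_conj_eqs(9) 9 False by simp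
      have b: "pair_refl m n (h + 1) = h - 1" using pair_refl_eqs(2)[of "h+1"] False bounds by simp
      have c: "pair_succ m n (h - 1) = h" using pair_succ_eqs(1)[of "h - 1"] False bounds by simp
      show ?thesis using a b c d pair_conj_eqs(6) by simp
    qed
  qed
qed

lemma pair_conj_inv_eqs:
  shows "pair_conj_inv m n m = 0"
    and "0 < j \<Longrightarrow> j < h \<Longrightarrow> pair_conj_inv m n j = j"
    and "pair_conj_inv m n (m + k) = h"
    and "h + 1 < j \<Longrightarrow> j < m \<Longrightarrow> pair_conj_inv m n j = j - 1"
    and "pair_conj_inv m n 0 = (if m = 2 then m + n - 1 else m - 1)"
    and "pair_conj_inv m n h = m"
    and "m < j \<Longrightarrow> j < m + k \<Longrightarrow> pair_conj_inv m n j = j"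
    and "m + k < j \<Longrightarrow> pair_conj_inv m n j = j - 1"
    and "m > 2 \<Longrightarrow> pair_conj_inv m n (h + 1) = m + n - 1"
  using mh nk h1 k1 by (simp_all add: pair_conj_inv_def; arith?)+

lemma pair_conj_inv_conj:
  assumes i: "i < m + n"
  shows "pair_conj_inv m n (pair_conj m n i) = i \<and> pair_conj m n i < m + n"
proof -
  note bounds = mh nk h1 k1 i
  from pair_index_cases[OF i] show ?thesis
  proof cases
    case 1 then show ?thesis using pair_conj_eqs(1) pair_conj_inv_eqs(1) bounds by simp
  next
    case 2
    have a: "pair_conj m n i = i" by (rule pair_conj_eqs(2)) (use 2 in linarith)+
    have b: "pair_conj_inv m n i = i" by (rule pair_conj_inv_eqs(2)) (use 2 in linarith)+
    show ?thesis using a b bounds by simp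
  next
    case 3 then show ?thesis using pair_conj_eqs(3) pair_conj_inv_eqs(3) bounds by simp
  next
    case 4
    have a: "pair_conj m n i = i + 1" by (rule pair_conj_eqs(4)) (use 4 in linarith)+
    have b: "pair_conj_inv m n (i + 1) = i + 1 - 1" by (rule pair_conj_inv_eqs(4)) (use 4 bounds in linarith)+
    show ?thesis using a b 4 bounds by simp
  next
    case 5
    have a: "pair_conj m n i = 0" using pair_conj_eqs(5) 5 by simp
    have "m \<noteq> 2" using 5 bounds by linarith
    then show ?thesis using a pair_conj_inv_eqs(5) 5 bounds by simp
  next
    case 6 then show ?thesis using pair_conj_eqs(6) pair_conj_inv_eqs(6) bounds by simp
  next
    case 7
    have a: "pair_conj m n i = i" by (rule pair_conj_eqs(7)) (use 7 in linarith)+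
    have b: "pair_conj_inv m n i = i" by (rule pair_conj_inv_eqs(7)) (use 7 in linarith)+
    show ?thesis using a b bounds by simp
  next
    case 8
    have a: "pair_conj m n i = i + 1" by (rule pair_conj_eqs(8)) (use 8 in linarith)+
    have b: "pair_conj_inv m n (i + 1) = i + 1 - 1" by (rule pair_conj_inv_eqs(8)) (use 8 bounds in linarith)+
    show ?thesis using a b 8 bounds by simp
  next
    case 9
    show ?thesis
    proof (cases "m = 2")
      case True
      have a: "pair_conj m n i = 0" using pair_conj_eqs(9) 9 True by simp
      show ?thesis using a pair_conj_inv_eqs(5) True 9 bounds by simp
    next
      case False
      have a: "pair_conj m n i = h + 1" using pair_conj_eqs(9) 9 False by simp
      have "m > 2" using False bounds by linarith
      then show ?thesis using a pair_conj_inv_eqs(9) 9 bounds by simp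
    qed
  qed
qed

lemma pair_refl_involution:
  assumes i: "i < m + n"
  shows "pair_refl m n (pair_refl m n i) = i \<and> pair_refl m n i < m + n"
proof -
  note bounds = mh nk h1 k1 i
  consider "i = 0" | "0 < i" "i < m" | "m \<le> i" using bounds by linarith
  then show ?thesis
  proof cases
    case 1 then show ?thesis using pair_refl_eqs(1) bounds by simp
  next
    case 2
    have a: "pair_refl m n i = m - i" by (rule pair_refl_eqs(2)) (use 2 in linarith)+
    have b: "pair_refl m n (m - i) = m - (m - i)" by (rule pair_refl_eqs(2)) (use 2 in linarith)+
    show ?thesis using a b 2 bounds by simp
  next
    case 3
    have a: "pair_refl m n i = 2*m + n - 1 - i" by (rule pair_refl_eqs(3)) (use 3 in linarith)+
    have b: "pair_refl m n (2*m + n - 1 - i) = 2*m + n - 1 - (2*m + n - 1 - i)" by (rule pair_refl_eqs(3)) (use 3 bounds in linarith)+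
    show ?thesis using a b 3 bounds by simp
  qed
qed
end

lemma cycle_of_list_append_nth:
  assumes zs: "distinct (cs @ ds)" and i: "i < length (cs @ ds)"
  shows "(cycle_of_list ds \<circ> cycle_of_list cs) ((cs @ ds) ! i) =
    (if i < length cs then cs ! (Suc i mod length cs) else ds ! (Suc (i - length cs) mod length ds))"
proof (cases "i < length cs")
  case True
  then have "cs ! (Suc i mod length cs) \<in> set cs" by (auto intro!: nth_mem mod_less_divisor)
  then have "cs ! (Suc i mod length cs) \<notin> set ds" using zs by auto
  then show ?thesis
    using zs True cycle_of_list_nth[of cs i] by (simp add: nth_append id_outside_supp)
next
  case False
  then have j: "i - length cs < length ds" using i by simp
  then have "ds ! (Suc (i - length cs) mod length ds) \<in> set ds" by (auto intro!: nth_mem mod_less_divisor)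
  then have "ds ! (Suc (i - length cs) mod length ds) \<notin> set cs" using zs by auto
  moreover have "ds ! (i - length cs) \<notin> set cs" using j zs by auto
  then show ?thesis
    using zs False cycle_of_list_nth[of ds "i - length cs"] j by (simp add: nth_append id_outside_supp)
qed

lemma commutator_on_even_cycle_pair:
  assumes zs: "distinct (cs @ ds)" and even: "even (length cs)" "even (length ds)"
    and nonempty: "cs \<noteq> []" "ds \<noteq> []"
  shows "commutator_on (set cs \<union> set ds) (cycle_of_list ds \<circ> cycle_of_list cs)"
proof -
  define m where "m = length cs"
  define n where "n = length ds"
  obtain h k where mh: "m = 2*h" and nk: "n = 2*k" using even by (auto simp: m_def n_def elim!: evenE)
  have "m > 0" "n > 0" using nonempty by (simp_all add: m_def n_def)
  then have h1: "h \<ge> 1" and k1: "k \<ge> 1" using mh nk by simp_all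
  have len: "length (cs @ ds) = m + n" by (simp add: m_def n_def)
  have "commutator_on (set (cs @ ds)) (cycle_of_list ds \<circ> cycle_of_list cs)"
  proof (rule commutator_on_by_indices[where X = "pair_conj m n" and Y = "pair_refl m n" and G = "pair_succ m n"])
    show "distinct (cs @ ds)" by (rule zs)
    show "pair_conj m n i < length (cs @ ds)" "pair_refl m n i < length (cs @ ds)"
      if "i < length (cs @ ds)" for i
      using that pair_conj_inv_conj[OF mh nk h1 k1] pair_refl_involution[OF mh nk h1 k1] len by simp_all
    show "inj_on (pair_conj m n) {..<length (cs @ ds)}"
      by (rule inj_on_inverseI[where g = "pair_conj_inv m n"])
        (use pair_conj_inv_conj[OF mh nk h1 k1] len in auto)
    show "inj_on (pair_refl m n) {..<length (cs @ ds)}"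
      by (rule inj_on_inverseI[where g = "pair_refl m n"]) (use pair_refl_involution[OF mh nk h1 k1] len in auto)
    show "pair_succ m n (pair_refl m n (pair_conj m n i)) = pair_conj m n (pair_refl m n i)"
      if "i < length (cs @ ds)" for i
      using that pair_succ_refl_conj[OF mh nk h1 k1] len by simp
    show "(cycle_of_list ds \<circ> cycle_of_list cs) a = a" if "a \<notin> set (cs @ ds)" for a
      using that by (simp add: id_outside_supp)
    show "(cycle_of_list ds \<circ> cycle_of_list cs) ((cs @ ds) ! i) = (cs @ ds) ! pair_succ m n i"
      if "i < length (cs @ ds)" for i
    proof (cases "i < m")
      case True
      then show ?thesis using cycle_of_list_append_nth[OF zs that] mh h1
        by (auto simp: m_def nth_append pair_succ_def)
    next
      case False
      then show ?thesis using cycle_of_list_append_nth[OF zs that] that mh nk k1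
        by (auto simp: m_def n_def nth_append pair_succ_def mod_if Suc_diff_le)
    qed
  qed
  then show ?thesis by simp
qed

section \<open>Even permutations are commutators\<close>

text \<open>An odd permutation is never a commutator; the second clause lets the cycles of even length
  of a cycle decomposition be paired up.\<close>

definition parity_commutator_on :: "'a set \<Rightarrow> ('a \<Rightarrow> 'a) \<Rightarrow> bool" where
  "parity_commutator_on I p \<longleftrightarrow>
    (if evenperm p then commutator_on I p
     else \<forall>ds. distinct ds \<and> even (length ds) \<and> ds \<noteq> [] \<and> set ds \<inter> I = {} \<longrightarrow>
       commutator_on (set ds \<union> I) (cycle_of_list ds \<circ> p))"

lemma cycle_decomp_permutes: "cycle_decomp I p \<Longrightarrow> finite I \<and> p permutes I"
proof (induction rule: cycle_decomp.induct)
  case (comp I p cs)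
  have "p permutes set cs \<union> I" "cycle_of_list cs permutes set cs \<union> I"
    using comp.IH permutes_subset cycle_permutes by blast+
  then show ?case using comp.IH permutes_compose by blast
qed (simp add: id_def)

lemma parity_commutator_on_odd_cycle:
  assumes p: "parity_commutator_on I p" "permutation p"
    and cs: "distinct cs" "odd (length cs)" "set cs \<inter> I = {}"
  shows "parity_commutator_on (set cs \<union> I) (cycle_of_list cs \<circ> p)"
proof -
  have c: "commutator_on (set cs) (cycle_of_list cs)" using commutator_on_odd_cycle cs by blast
  have parity: "evenperm (cycle_of_list cs \<circ> p) \<longleftrightarrow> evenperm p"
    using cs evenperm_comp[OF permutation_of_cycle p(2)] by (simp add: evenperm_cycle_of_list)
  show ?thesis
  proof (cases "evenperm p")
    case True
    then show ?thesis using p cs commutator_on_Un[OF c] by (simp add: parity_commutator_on_def parity)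
  next
    case False
    have "commutator_on (set ds \<union> (set cs \<union> I)) (cycle_of_list ds \<circ> (cycle_of_list cs \<circ> p))"
      if ds: "distinct ds" "even (length ds)" "ds \<noteq> []" "set ds \<inter> (set cs \<union> I) = {}" for ds
    proof -
      have "commutator_on (set ds \<union> I) (cycle_of_list ds \<circ> p)"
        using p False ds by (auto simp: parity_commutator_on_def)
      then have "commutator_on (set cs \<union> (set ds \<union> I)) (cycle_of_list cs \<circ> (cycle_of_list ds \<circ> p))"
        using commutator_on_Un[OF c] cs ds by blast
      moreover have "cycle_of_list cs \<circ> cycle_of_list ds = cycle_of_list ds \<circ> cycle_of_list cs"
        using cycles_commute[OF cs(1) ds(1)] ds by blast
      then have "cycle_of_list cs \<circ> (cycle_of_list ds \<circ> p) = cycle_of_list ds \<circ> (cycle_of_list cs \<circ> p)"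
        by (simp add: comp_assoc[symmetric])
      ultimately show ?thesis by (simp add: Un_left_commute)
    qed
    then show ?thesis using False by (simp add: parity_commutator_on_def parity)
  qed
qed

lemma parity_commutator_on_even_cycle:
  assumes p: "parity_commutator_on I p" "permutation p"
    and cs: "distinct cs" "even (length cs)" "cs \<noteq> []" "set cs \<inter> I = {}"
  shows "parity_commutator_on (set cs \<union> I) (cycle_of_list cs \<circ> p)"
proof -
  have parity: "evenperm (cycle_of_list cs \<circ> p) \<longleftrightarrow> \<not> evenperm p"
    using cs evenperm_comp[OF permutation_of_cycle p(2)] by (simp add: evenperm_cycle_of_list)
  show ?thesis
  proof (cases "evenperm p")
    case True
    have "commutator_on (set ds \<union> (set cs \<union> I)) (cycle_of_list ds \<circ> (cycle_of_list cs \<circ> p))"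
      if ds: "distinct ds" "even (length ds)" "ds \<noteq> []" "set ds \<inter> (set cs \<union> I) = {}" for ds
    proof -
      have "commutator_on (set cs \<union> set ds) (cycle_of_list ds \<circ> cycle_of_list cs)"
        using commutator_on_even_cycle_pair[of cs ds] cs ds by auto
      moreover have "commutator_on I p" using p True by (simp add: parity_commutator_on_def)
      moreover have "(set cs \<union> set ds) \<inter> I = {}" using cs ds by blast
      ultimately have "commutator_on ((set cs \<union> set ds) \<union> I) ((cycle_of_list ds \<circ> cycle_of_list cs) \<circ> p)"
        by (rule commutator_on_Un)
      then show ?thesis by (simp add: comp_assoc Un_ac)
    qed
    then show ?thesis using True by (simp add: parity_commutator_on_def parity)
  next
    case False
    then show ?thesis using p cs by (simp add: parity_commutator_on_def parity)
  qed
qed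

lemma cycle_decomp_parity_commutator_on:
  assumes "cycle_decomp I p"
  shows "parity_commutator_on I p"
  using assms
proof (induction rule: cycle_decomp.induct)
  case empty
  show ?case unfolding parity_commutator_on_def commutator_on_def by (auto intro!: exI[of _ id])
next
  case (comp I p cs)
  have "permutation p"
    using cycle_decomp_permutes[OF comp.hyps(1)] by (blast intro: permutes_imp_permutation)
  consider "cs = []" | "odd (length cs)" | "even (length cs)" "cs \<noteq> []" by blast
  then show ?case
  proof cases
    case 1
    then show ?thesis using comp.IH by simp
  next
    case 2
    then show ?thesis
      using parity_commutator_on_odd_cycle comp.IH \<open>permutation p\<close> comp.hyps by blast
  next
    case 3
    then show ?thesis
      using parity_commutator_on_even_cycle comp.IH \<open>permutation p\<close> comp.hyps by blast
  qed
qed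

lemma commutator_on_evenperm:
  assumes "p permutes S" "finite S" "evenperm p"
  shows "commutator_on S p"
  using cycle_decomp_parity_commutator_on[OF cycle_decomposition[OF assms(1,2)]] assms(3)
  by (simp add: parity_commutator_on_def)

lemma evenperm_compose_parity_swap:
  assumes "permutation x" "a \<noteq> b"
  shows "evenperm (x \<circ> (if evenperm x then id else transpose a b))"
  using assms by (simp add: evenperm_comp permutation_swap_id evenperm_swap)

text \<open>The witnesses from \<open>commutator_on\<close> may be odd; composing them with commuting transpositions
  of fresh points corrects their parity and leaves the commutator unchanged.\<close>

lemma Alt_inf_commutator:
  assumes g: "g \<in> Alt_inf"
  shows "\<exists>x\<in>Alt_inf. \<exists>y\<in>Alt_inf. g = x \<circ> y \<circ> inv x \<circ> inv y"
proof -
  obtain S where S: "finite S" "g permutes S"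
    using g permutation_permutesE by (auto simp: Alt_inf_def)
  then obtain x y where x: "x permutes S" and y: "y permutes S" and eq: "g \<circ> y \<circ> x = x \<circ> y"
    using commutator_on_evenperm g unfolding commutator_on_def Alt_inf_def by blast
  obtain M where M: "S \<subseteq> {..<M}" using S(1) finite_nat_set_iff_bounded by auto
  define x' where "x' = (if evenperm x then id else transpose M (M + 1))"
  define y' where "y' = (if evenperm y then id else transpose (M + 2) (M + 3))"
  have x': "x' permutes {M, M + 1}" and y': "y' permutes {M + 2, M + 3}"
    by (auto simp: x'_def y'_def permutes_swap_id)
  have "x' \<circ> y' = y' \<circ> x'" by (rule permutes_disjoint_commute[OF x' y']) auto
  then have eq': "id \<circ> y' \<circ> x' = x' \<circ> y'" by simp
  have "(g \<circ> id) \<circ> (y \<circ> y') \<circ> (x \<circ> x') = (x \<circ> x') \<circ> (y \<circ> y')"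
    by (rule commutator_eq_compose_disjoint[OF x y
          permutes_subset[OF x', of "{M..M + 3}"] permutes_subset[OF y', of "{M..M + 3}"] _ eq eq'])
      (use M in auto)
  moreover have "permutation x" "permutation y"
    using x y S(1) permutes_imp_permutation by blast+
  then have X: "x \<circ> x' \<in> Alt_inf" and Y: "y \<circ> y' \<in> Alt_inf"
    using evenperm_compose_parity_swap[of x M "M + 1"] evenperm_compose_parity_swap[of y "M + 2" "M + 3"]
    by (auto simp: Alt_inf_def x'_def y'_def permutation_compose permutation_swap_id)
  ultimately have "g = (x \<circ> x') \<circ> (y \<circ> y') \<circ> inv (x \<circ> x') \<circ> inv (y \<circ> y')"
    by (intro commutator_of_comp_eq) (auto simp: Alt_inf_def permutation_bijective)
  then show ?thesis using X Y by blast
qed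

section \<open>Squares of conjugacy classes\<close>

lemma moved_points_conj:
  assumes "bij h"
  shows "{a. (h \<circ> g \<circ> inv h) a \<noteq> a} = h ` {a. g a \<noteq> a}"
proof -
  have "(h \<circ> g \<circ> inv h) a \<noteq> a \<longleftrightarrow> g (inv h a) \<noteq> inv h a" for a
    using assms by (metis bij_inv_eq_iff comp_apply)
  moreover have "a = h (inv h a)" for a using assms by (simp add: bij_is_surj surj_f_inv_f)
  moreover have "inv h (h a) = a" for a using assms by (simp add: bij_is_inj)
  ultimately show ?thesis by (auto intro!: image_eqI)
qed

lemma moved_points_cycle_of_list:
  assumes "distinct cs" "length cs \<ge> 2"
  shows "{a. cycle_of_list cs a \<noteq> a} = set cs"
proof -
  have "cycle_of_list cs (cs ! i) \<noteq> cs ! i" if "i < length cs" for i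
  proof -
    have "Suc i mod length cs \<noteq> i" "Suc i mod length cs < length cs"
      using that assms(2) by (auto simp: mod_Suc)
    then show ?thesis using assms(1) that cycle_of_list_nth[OF assms(1) that]
      by (simp add: nth_eq_iff_index_eq)
  qed
  then have "set cs \<subseteq> {a. cycle_of_list cs a \<noteq> a}" by (auto simp: in_set_conv_nth)
  moreover have "{a. cycle_of_list cs a \<noteq> a} \<subseteq> set cs" using id_outside_supp[of _ cs] by blast
  ultimately show ?thesis by blast
qed

lemma square_conj_class_ne_Alt_inf:
  assumes g: "g \<in> Alt_inf"
  shows "{c1 \<circ> c2 | c1 c2. c1 \<in> conj_class g \<and> c2 \<in> conj_class g} \<noteq> Alt_inf"
proof
  assume square: "{c1 \<circ> c2 | c1 c2. c1 \<in> conj_class g \<and> c2 \<in> conj_class g} = Alt_inf"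
  define s where "s = card {a. g a \<noteq> a}"
  have moved_conj: "finite {a. c a \<noteq> a} \<and> card {a. c a \<noteq> a} \<le> s" if c: "c \<in> conj_class g" for c
  proof -
    obtain h where h: "c = h \<circ> g \<circ> inv h" "h \<in> Alt_inf" using c unfolding conj_class_def by blast
    then have "{a. c a \<noteq> a} = h ` {a. g a \<noteq> a}"
      using moved_points_conj permutation_bijective by (auto simp: Alt_inf_def)
    then show ?thesis using g by (simp add: s_def card_image_le Alt_inf_def permutation)
  qed
  define q where "q = cycle_of_list [0..<2 * s + 3]"
  have moved_q: "{a. q a \<noteq> a} = {0..<2 * s + 3}"
    unfolding q_def by (subst moved_points_cycle_of_list) auto
  have "q \<in> Alt_inf"
    by (simp add: Alt_inf_def q_def permutation_of_cycle evenperm_cycle_of_list)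
  then obtain c1 c2 where q: "q = c1 \<circ> c2" and c: "c1 \<in> conj_class g" "c2 \<in> conj_class g"
    using square by blast
  have "{a. q a \<noteq> a} \<subseteq> {a. c1 a \<noteq> a} \<union> {a. c2 a \<noteq> a}" using q by auto
  then have "card {a. q a \<noteq> a} \<le> card ({a. c1 a \<noteq> a} \<union> {a. c2 a \<noteq> a})"
    using moved_conj[OF c(1)] moved_conj[OF c(2)] by (intro card_mono) auto
  also have "\<dots> \<le> card {a. c1 a \<noteq> a} + card {a. c2 a \<noteq> a}" by (rule card_Un_le)
  finally have "card {a. q a \<noteq> a} \<le> card {a. c1 a \<noteq> a} + card {a. c2 a \<noteq> a}" .
  then show False using moved_conj[OF c(1)] moved_conj[OF c(2)] moved_q by simp
qed

theorem mainTheorem4: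
  shows "(\<forall>g\<in>Alt_inf. \<exists>x\<in>Alt_inf. \<exists>y\<in>Alt_inf. g = x \<circ> y \<circ> inv x \<circ> inv y)
    \<and> (\<forall>g\<in>Alt_inf. {c1 \<circ> c2 | c1 c2. c1 \<in> conj_class g \<and> c2 \<in> conj_class g} \<noteq> Alt_inf)"
  using Alt_inf_commutator square_conj_class_ne_Alt_inf by blast

end
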